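(* Suppose the random walk $R$ is irreducible, aperiodic, positive recurrent and has negative drift. Let $\mu(n)=\mu_0+\sum_{i=1}^M\mu_i n_i$ with $\mu_0\ge1$ and $\mu_1,\dots,\mu_M\ge0$. Define $\mu^*=\max_{i=0,\dots,M}\mu_i$, $$v_i=\frac{-\mu^*}{\sup_{n\in S:\,i\in I(n)}\{s^+_i(n)-s^-_i(n)\}}\ (i=1,\dots,M),\qquad V(n)=\sum_{i=1}^M v_i n_i^2,$$ $$b=\mu_0+\sum_{i=1}^M v_i,\qquad B=\Big\{n\in S:\ n_i\le\frac{\mu_0+\sum_{l=1}^M v_l}{\mu^*}\ \ \forall i=1,\dots,M\Big\}.$$ Then $0\le v_i<\infty$, $V:S\to[0,\infty)$, $B$ is finite, and for all $n\in S$, $$\sum_{u\in N_{c(n)}}p_{c(n),u}V(n+u)-V(n)\le-\mu(n)+b\,\mathbf 1_B(n),$$ i.e. $R$ is $\mu$-ergodic.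
   Context: Let $M\ge 1$ and $S=\{0,1,2,\dots\}^M$. For $n\in S$ let $N(n)=\{u\in\{-1,0,1\}^M: n+u\in S\}$. A partition $C=\{C_k\}_{k\in K}$ ($K$ finite) of $S$ is a family of pairwise disjoint sets covering $S$ such that $N(n)=N(n')$ whenever $n,n'$ lie in the same $C_k$; write $N_k$ for this common set and $c(n)$ for the index $k$ with $n\in C_k$. The random walk $R$ is a discrete-time Markov chain on $S$ with transition probabilities $P(n,n+u)=p_{c(n),u}\ge0$ for $u\in N_{c(n)}$, $P(n,m)=0$ if $m-n\notin N_{c(n)}$, and $\sum_{u\in N_k}p_{k,u}=1$ for every $k$. For $n\in S$, $I(n)=\{i\in\{1,\dots,M\}: n_i>0\}$, $s^+_i(n)=\sum_{u\in N_{c(n)}:u_i=1}p_{c(n),u}$ and $s^-_i(n)=\sum_{u\in N_{c(n)}:u_i=-1}p_{c(n),u}$. $R$ has negative drift if $\sup_{n\in S,\,i\in I(n)}\{s^+_i(n)-s^-_i(n)\}<0$. *)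

theory Defs
  imports Complex_Main "HOL-Library.Function_Algebras" "HOL-Library.Indicator_Function"
begin

text \<open>Coordinates are indexed 0..M-1 (the paper uses 1..M). States are functions
  nat \<Rightarrow> int vanishing at indices \<ge> M, with nonnegative coordinates below M.\<close>

definition St :: "nat \<Rightarrow> (nat \<Rightarrow> int) set" where
  "St M = {n. (\<forall>i<M. 0 \<le> n i) \<and> (\<forall>i. M \<le> i \<longrightarrow> n i = 0)}"

definition Nb :: "nat \<Rightarrow> (nat \<Rightarrow> int) \<Rightarrow> (nat \<Rightarrow> int) set" where
  "Nb M n = {u. (\<forall>i<M. u i \<in> {-1,0,1}) \<and> (\<forall>i. M \<le> i \<longrightarrow> u i = 0) \<and> n + u \<in> St M}"

text \<open>Partition with finite index set K, given by the class map c, such that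
  N is constant on each class; p k u are the step probabilities of class k.\<close>
definition is_partition_rw ::
  "nat \<Rightarrow> 'k set \<Rightarrow> ((nat \<Rightarrow> int) \<Rightarrow> 'k) \<Rightarrow> ('k \<Rightarrow> (nat \<Rightarrow> int) \<Rightarrow> real) \<Rightarrow> bool" where
  "is_partition_rw M K c p \<longleftrightarrow>
     finite K \<and> c ` St M \<subseteq> K \<and>
     (\<forall>n\<in>St M. \<forall>n'\<in>St M. c n = c n' \<longrightarrow> Nb M n = Nb M n') \<and>
     (\<forall>n\<in>St M. (\<forall>u\<in>Nb M n. 0 \<le> p (c n) u) \<and> (\<Sum>u\<in>Nb M n. p (c n) u) = 1)"

definition trans_prob :: "nat \<Rightarrow> ((nat \<Rightarrow> int) \<Rightarrow> 'k) \<Rightarrow> ('k \<Rightarrow> (nat \<Rightarrow> int) \<Rightarrow> real)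
    \<Rightarrow> (nat \<Rightarrow> int) \<Rightarrow> (nat \<Rightarrow> int) \<Rightarrow> real" where
  "trans_prob M c p n m = (if m - n \<in> Nb M n then p (c n) (m - n) else 0)"

primrec nstep :: "nat \<Rightarrow> ((nat \<Rightarrow> int) \<Rightarrow> 'k) \<Rightarrow> ('k \<Rightarrow> (nat \<Rightarrow> int) \<Rightarrow> real)
    \<Rightarrow> nat \<Rightarrow> (nat \<Rightarrow> int) \<Rightarrow> (nat \<Rightarrow> int) \<Rightarrow> real" where
  "nstep M c p 0 n m = (if n = m then 1 else 0)"
| "nstep M c p (Suc k) n m = (\<Sum>u\<in>Nb M n. p (c n) u * nstep M c p k (n + u) m)"

primrec fpass :: "nat \<Rightarrow> ((nat \<Rightarrow> int) \<Rightarrow> 'k) \<Rightarrow> ('k \<Rightarrow> (nat \<Rightarrow> int) \<Rightarrow> real)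
    \<Rightarrow> nat \<Rightarrow> (nat \<Rightarrow> int) \<Rightarrow> (nat \<Rightarrow> int) \<Rightarrow> real" where
  "fpass M c p 0 n m = 0"
| "fpass M c p (Suc k) n m =
     (if k = 0 then trans_prob M c p n m
      else (\<Sum>u\<in>Nb M n. if n + u = m then 0 else p (c n) u * fpass M c p k (n + u) m))"

definition irreducible_rw where
  "irreducible_rw M c p \<longleftrightarrow> (\<forall>n\<in>St M. \<forall>m\<in>St M. \<exists>k. nstep M c p k n m > 0)"

definition aperiodic_rw where
  "aperiodic_rw M c p \<longleftrightarrow> (\<forall>n\<in>St M. Gcd {k. 0 < k \<and> nstep M c p k n n > 0} = 1)"

definition pos_recurrent_rw where
  "pos_recurrent_rw M c p \<longleftrightarrow>
     (\<forall>n\<in>St M. (\<lambda>k. fpass M c p k n n) sums 1 \<and> summable (\<lambda>k. real k * fpass M c p k n n))"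

definition Iset :: "nat \<Rightarrow> (nat \<Rightarrow> int) \<Rightarrow> nat set" where
  "Iset M n = {i. i < M \<and> 0 < n i}"

definition splus where
  "splus M c p i n = (\<Sum>u\<in>{u\<in>Nb M n. u i = 1}. p (c n) u)"

definition sminus where
  "sminus M c p i n = (\<Sum>u\<in>{u\<in>Nb M n. u i = -1}. p (c n) u)"

definition drift_i where
  "drift_i M c p i = Sup {splus M c p i n - sminus M c p i n | n. n \<in> St M \<and> i \<in> Iset M n}"

definition negative_drift where
  "negative_drift M c p \<longleftrightarrow>
     Sup {splus M c p i n - sminus M c p i n | n i. n \<in> St M \<and> i \<in> Iset M n} < 0"

end

theory Submission
  imports Defs "HOL-Library.FuncSet"
begin

text \<open>One step changes \<open>n\<^sub>i\<^sup>2\<close> by \<open>2 n\<^sub>i u\<^sub>i + u\<^sub>i\<^sup>2\<close>, whose expectation is at most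
  \<open>2 n\<^sub>i d\<^sub>i + 1\<close> with \<open>d\<^sub>i < 0\<close> the drift bound of coordinate \<open>i\<close>. The weights
  \<open>v\<^sub>i = -\<mu>*/d\<^sub>i\<close> turn this into \<open>v\<^sub>i - 2\<mu>* n\<^sub>i\<close>, so the expected change of \<open>V\<close> is at most
  \<open>\<Sum>v\<^sub>i - 2\<mu>*|n|\<close>. Since \<open>\<mu>(n) \<le> \<mu>\<^sub>0 + \<mu>*|n|\<close>, this is below \<open>-\<mu>(n)\<close> as soon as
  \<open>\<mu>*|n| \<ge> b\<close>, which holds outside the box \<open>B\<close>.\<close>

lemma finite_bounded_support:
  assumes "finite A"
  shows "finite {f :: nat \<Rightarrow> int. (\<forall>i<M. f i \<in> A) \<and> (\<forall>i. M \<le> i \<longrightarrow> f i = 0)}"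
proof -
  have "{f :: nat \<Rightarrow> int. (\<forall>i<M. f i \<in> A) \<and> (\<forall>i. M \<le> i \<longrightarrow> f i = 0)}
     \<subseteq> (\<lambda>g i. if i < M then g i else 0) ` PiE {..<M} (\<lambda>_. A)"
  proof
    fix f :: "nat \<Rightarrow> int"
    assume f: "f \<in> {f. (\<forall>i<M. f i \<in> A) \<and> (\<forall>i. M \<le> i \<longrightarrow> f i = 0)}"
    then have "f = (\<lambda>i. if i < M then restrict f {..<M} i else 0)"
      by (auto simp: fun_eq_iff)
    moreover have "restrict f {..<M} \<in> PiE {..<M} (\<lambda>_. A)"
      using f by auto
    ultimately show "f \<in> (\<lambda>g i. if i < M then g i else 0) ` PiE {..<M} (\<lambda>_. A)"
      by blast
  qed
  moreover have "finite (PiE {..<M} (\<lambda>_. A))"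
    using assms by (simp add: finite_PiE)
  ultimately show ?thesis
    using finite_subset by blast
qed

lemma finite_Nb: "finite (Nb M n)"
proof -
  have "Nb M n \<subseteq> {f. (\<forall>i<M. f i \<in> {-1, 0, 1}) \<and> (\<forall>i. M \<le> i \<longrightarrow> f i = 0)}"
    unfolding Nb_def by auto
  then show ?thesis
    using finite_bounded_support[of "{-1, 0, 1}" M] finite_subset by blast
qed

lemma sum_mult_unit_step:
  assumes "finite N" "\<forall>u\<in>N. u i \<in> {-1, 0, 1 :: int}"
  shows "(\<Sum>u\<in>N. P u * real_of_int (u i))
    = (\<Sum>u\<in>{u\<in>N. u i = 1}. P u) - (\<Sum>u\<in>{u\<in>N. u i = -1}. P u)"
proof -
  have "(\<Sum>u\<in>N. P u * real_of_int (u i))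
      = (\<Sum>u\<in>N. (if u i = 1 then P u else 0) - (if u i = -1 then P u else 0))"
    by (rule sum.cong) (use assms in auto)
  also have "\<dots> = (\<Sum>u\<in>{u\<in>N. u i = 1}. P u) - (\<Sum>u\<in>{u\<in>N. u i = -1}. P u)"
    using assms(1) by (simp add: sum_subtractf sum.inter_filter)
  finally show ?thesis .
qed

lemma finite_St_box: "finite {n \<in> St M. \<forall>i<M. real_of_int (n i) \<le> r}"
proof -
  have "{n \<in> St M. \<forall>i<M. real_of_int (n i) \<le> r}
      \<subseteq> {f. (\<forall>i<M. f i \<in> {0..\<lceil>r\<rceil>}) \<and> (\<forall>i. M \<le> i \<longrightarrow> f i = 0)}"
    unfolding St_def by (auto simp: le_ceiling_iff)
  then show ?thesis
    using finite_bounded_support finite_subset by blast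
qed

lemma St_nonneg: "n \<in> St M \<Longrightarrow> i < M \<Longrightarrow> 0 \<le> n i"
  unfolding St_def by auto

lemma Nb_unit_step: "u \<in> Nb M n \<Longrightarrow> i < M \<Longrightarrow> u i \<in> {-1, 0, 1}"
  unfolding Nb_def by auto

lemma mean_step_eq:
  "i < M \<Longrightarrow> (\<Sum>u\<in>Nb M n. p (c n) u * real_of_int (u i)) = splus M c p i n - sminus M c p i n"
  unfolding splus_def sminus_def by (rule sum_mult_unit_step[OF finite_Nb]) (use Nb_unit_step in blast)

context
  fixes M :: nat and K :: "'k set" and c :: "(nat \<Rightarrow> int) \<Rightarrow> 'k"
    and p :: "'k \<Rightarrow> (nat \<Rightarrow> int) \<Rightarrow> real"
  assumes partition: "is_partition_rw M K c p"
begin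

lemma step_prob_nonneg: "n \<in> St M \<Longrightarrow> u \<in> Nb M n \<Longrightarrow> 0 \<le> p (c n) u"
  using partition unfolding is_partition_rw_def by blast

lemma step_prob_sum: "n \<in> St M \<Longrightarrow> (\<Sum>u\<in>Nb M n. p (c n) u) = 1"
  using partition unfolding is_partition_rw_def by blast

lemma splus_minus_sminus_le_1:
  assumes "n \<in> St M"
  shows "splus M c p i n - sminus M c p i n \<le> 1"
proof -
  have "splus M c p i n \<le> (\<Sum>u\<in>Nb M n. p (c n) u)"
    unfolding splus_def by (rule sum_mono2) (use finite_Nb step_prob_nonneg assms in auto)
  moreover have "0 \<le> sminus M c p i n"
    unfolding sminus_def by (rule sum_nonneg) (use step_prob_nonneg assms in auto)
  ultimately show ?thesis
    using step_prob_sum[OF assms] by simp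
qed

lemma bdd_above_drifts:
  "bdd_above {splus M c p i n - sminus M c p i n | n i. n \<in> St M \<and> i \<in> Iset M n}"
  by (rule bdd_aboveI[of _ 1]) (auto intro: splus_minus_sminus_le_1)

lemma drift_le_drift_i:
  assumes "n \<in> St M" "i \<in> Iset M n"
  shows "splus M c p i n - sminus M c p i n \<le> drift_i M c p i"
  unfolding drift_i_def
proof (rule cSup_upper)
  show "bdd_above {splus M c p i n - sminus M c p i n | n. n \<in> St M \<and> i \<in> Iset M n}"
    by (rule bdd_above_mono[OF bdd_above_drifts]) blast
qed (use assms in blast)

lemma drift_i_neg:
  assumes "negative_drift M c p" "i < M"
  shows "drift_i M c p i < 0"
proof -
  let ?e = "\<lambda>j. if j = i then 1 else 0 :: int"
  let ?D = "{splus M c p i n - sminus M c p i n | n. n \<in> St M \<and> i \<in> Iset M n}"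
  let ?A = "{splus M c p i n - sminus M c p i n | n i. n \<in> St M \<and> i \<in> Iset M n}"
  have "?e \<in> St M \<and> i \<in> Iset M ?e"
    using assms(2) by (auto simp: St_def Iset_def)
  then have "?D \<noteq> {}"
    by blast
  then have "Sup ?D \<le> Sup ?A"
    by (rule cSup_subset_mono[OF _ bdd_above_drifts]) blast
  then show ?thesis
    using assms(1) unfolding negative_drift_def drift_i_def by simp
qed

lemma expected_square_increment_le:
  assumes "n \<in> St M" "i < M"
  shows "(\<Sum>u\<in>Nb M n. p (c n) u * ((real_of_int (n i + u i))\<^sup>2 - (real_of_int (n i))\<^sup>2))
    \<le> 2 * real_of_int (n i) * drift_i M c p i + 1"
proof -
  let ?P = "p (c n)" and ?m1 = "\<Sum>u\<in>Nb M n. p (c n) u * real_of_int (u i)"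
  have expand: "(\<Sum>u\<in>Nb M n. ?P u * ((real_of_int (n i + u i))\<^sup>2 - (real_of_int (n i))\<^sup>2))
      = 2 * real_of_int (n i) * ?m1 + (\<Sum>u\<in>Nb M n. ?P u * (real_of_int (u i))\<^sup>2)"
    by (simp add: sum_distrib_left sum.distrib[symmetric] power2_eq_square algebra_simps)
  have "(\<Sum>u\<in>Nb M n. ?P u * (real_of_int (u i))\<^sup>2) \<le> (\<Sum>u\<in>Nb M n. ?P u)"
  proof (rule sum_mono)
    fix u assume u: "u \<in> Nb M n"
    then have "(real_of_int (u i))\<^sup>2 \<le> 1"
      using Nb_unit_step[OF u assms(2)] by auto
    then show "?P u * (real_of_int (u i))\<^sup>2 \<le> ?P u"
      using step_prob_nonneg[OF assms(1) u] by (simp add: mult_left_le)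
  qed
  then have second_moment: "(\<Sum>u\<in>Nb M n. ?P u * (real_of_int (u i))\<^sup>2) \<le> 1"
    using step_prob_sum[OF assms(1)] by simp
  have "real_of_int (n i) * ?m1 \<le> real_of_int (n i) * drift_i M c p i"
  proof (cases "n i = 0")
    case False
    then have "i \<in> Iset M n"
      using St_nonneg[OF assms] assms(2) unfolding Iset_def by simp
    then have "?m1 \<le> drift_i M c p i"
      using drift_le_drift_i[OF assms(1)] mean_step_eq[OF assms(2), where p = p and c = c and n = n] by simp
    then show ?thesis
      using St_nonneg[OF assms] by (simp add: mult_left_mono)
  qed simp
  then show ?thesis
    using expand second_moment by linarith
qed

end

lemma expected_quadratic_change:
  assumes "finite N" "(\<Sum>u\<in>N. P u) = 1"
  shows "(\<Sum>u\<in>N. P u * (\<Sum>i<M. w i * (real_of_int ((n + u) i))\<^sup>2)) - (\<Sum>i<M. w i * (real_of_int (n i))\<^sup>2)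
    = (\<Sum>i<M. w i * (\<Sum>u\<in>N. P u * ((real_of_int (n i + u i))\<^sup>2 - (real_of_int (n i))\<^sup>2)))"
proof -
  let ?W = "\<Sum>i<M. w i * (real_of_int (n i))\<^sup>2"
  have "(\<Sum>u\<in>N. P u * (\<Sum>i<M. w i * (real_of_int ((n + u) i))\<^sup>2)) - ?W
      = (\<Sum>u\<in>N. P u * (\<Sum>i<M. w i * (real_of_int ((n + u) i))\<^sup>2) - P u * ?W)"
    using assms(2) by (simp add: sum_subtractf sum_distrib_right[symmetric])
  also have "\<dots> = (\<Sum>u\<in>N. \<Sum>i<M. w i * (P u * ((real_of_int (n i + u i))\<^sup>2 - (real_of_int (n i))\<^sup>2)))"
    by (rule sum.cong) (auto simp: sum_distrib_left sum_subtractf[symmetric] algebra_simps)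
  also have "\<dots> = (\<Sum>i<M. w i * (\<Sum>u\<in>N. P u * ((real_of_int (n i + u i))\<^sup>2 - (real_of_int (n i))\<^sup>2)))"
    by (subst sum.swap) (simp add: sum_distrib_left)
  finally show ?thesis .
qed

lemma sum_coeff_le_max_coeff:
  assumes "n \<in> St M" "\<forall>i<M. \<mu> i \<le> \<mu>s"
  shows "(\<Sum>i<M. \<mu> i * real_of_int (n i)) \<le> \<mu>s * (\<Sum>i<M. real_of_int (n i))"
  unfolding sum_distrib_left
  using assms St_nonneg[OF assms(1)] by (auto intro!: sum_mono mult_right_mono)

lemma le_indicator_box:
  assumes "n \<in> St M" "0 < \<mu>s"
  shows "b - \<mu>s * (\<Sum>i<M. real_of_int (n i))
    \<le> b * indicator {n \<in> St M. \<forall>i<M. real_of_int (n i) \<le> b / \<mu>s} n"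
proof (cases "\<forall>i<M. real_of_int (n i) \<le> b / \<mu>s")
  case True
  have "0 \<le> \<mu>s * (\<Sum>i<M. real_of_int (n i))"
    using assms St_nonneg[OF assms(1)] by (intro mult_nonneg_nonneg sum_nonneg) auto
  then show ?thesis
    using True assms(1) by simp
next
  case False
  then obtain i where "i < M" "b / \<mu>s < real_of_int (n i)"
    by auto
  then have "b < \<mu>s * real_of_int (n i)"
    using assms(2) by (simp add: field_simps)
  also have "\<dots> \<le> \<mu>s * (\<Sum>i<M. real_of_int (n i))"
    using \<open>i < M\<close> assms St_nonneg[OF assms(1)]
    by (intro mult_left_mono member_le_sum) auto
  finally show ?thesis
    using False by simp
qed

theorem lemma4p3:
  fixes M :: nat and K :: "'k set" and c :: "(nat \<Rightarrow> int) \<Rightarrow> 'k"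
    and p :: "'k \<Rightarrow> (nat \<Rightarrow> int) \<Rightarrow> real"
    and \<mu>0 :: real and \<mu> :: "nat \<Rightarrow> real"
    and \<mu>s :: real and v :: "nat \<Rightarrow> real" and V :: "(nat \<Rightarrow> int) \<Rightarrow> real"
    and b :: real and B :: "(nat \<Rightarrow> int) set" and mu :: "(nat \<Rightarrow> int) \<Rightarrow> real"
  assumes "M \<ge> 1"
    and "is_partition_rw M K c p"
    and "irreducible_rw M c p" and "aperiodic_rw M c p" and "pos_recurrent_rw M c p"
    and "negative_drift M c p"
    and "\<mu>0 \<ge> 1" and "\<forall>i<M. \<mu> i \<ge> 0"
    and "mu = (\<lambda>n. \<mu>0 + (\<Sum>i<M. \<mu> i * real_of_int (n i)))"
    and "\<mu>s = Max (insert \<mu>0 (\<mu> ` {..<M}))"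
    and "v = (\<lambda>i. - \<mu>s / drift_i M c p i)"
    and "V = (\<lambda>n. \<Sum>i<M. v i * (real_of_int (n i))\<^sup>2)"
    and "b = \<mu>0 + (\<Sum>i<M. v i)"
    and "B = {n \<in> St M. \<forall>i<M. real_of_int (n i) \<le> (\<mu>0 + (\<Sum>l<M. v l)) / \<mu>s}"
  shows "(\<forall>i<M. 0 \<le> v i) \<and> (\<forall>n\<in>St M. 0 \<le> V n) \<and> finite B \<and>
    (\<forall>n\<in>St M. (\<Sum>u\<in>Nb M n. p (c n) u * V (n + u)) - V n \<le> - mu n + b * indicator B n)"
proof -
  note partition = assms(2) and drift_neg = drift_i_neg[OF assms(2,6)]
  have \<mu>s_max: "\<mu>0 \<le> \<mu>s" "\<forall>i<M. \<mu> i \<le> \<mu>s"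
    unfolding assms(10) by (auto intro: Max_ge)
  then have \<mu>s_pos: "0 < \<mu>s"
    using assms(7) by linarith
  have v_nonneg: "\<forall>i<M. 0 \<le> v i"
    using drift_neg \<mu>s_pos unfolding assms(11) by (auto intro!: divide_pos_neg less_imp_le)
  have "finite B"
    unfolding assms(14) by (rule finite_St_box)
  moreover have "(\<Sum>u\<in>Nb M n. p (c n) u * V (n + u)) - V n \<le> - mu n + b * indicator B n"
    if n: "n \<in> St M" for n
  proof -
    have "(\<Sum>u\<in>Nb M n. p (c n) u * V (n + u)) - V n
        \<le> (\<Sum>i<M. v i * (2 * real_of_int (n i) * drift_i M c p i + 1))"
      unfolding assms(12) expected_quadratic_change[OF finite_Nb step_prob_sum[OF partition n]]
      using v_nonneg expected_square_increment_le[OF partition n]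
      by (auto intro!: sum_mono mult_left_mono)
    also have "\<dots> = (\<Sum>i<M. v i - 2 * \<mu>s * real_of_int (n i))"
      using drift_neg unfolding assms(11) by (intro sum.cong) (auto simp: field_simps less_imp_neq)
    also have "\<dots> = b - \<mu>0 - 2 * (\<mu>s * (\<Sum>i<M. real_of_int (n i)))"
      unfolding assms(13) by (simp add: sum_subtractf sum_distrib_left mult.assoc)
    finally show ?thesis
      using sum_coeff_le_max_coeff[OF n \<mu>s_max(2)] le_indicator_box[OF n \<mu>s_pos, of b]
      unfolding assms(9,13,14) by linarith
  qed
  ultimately show ?thesis
    using v_nonneg unfolding assms(12) by (auto intro!: sum_nonneg)
qed

end
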